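(* Consider the semi-discrete DG scheme described in the context, with zero-flux boundary conditions, and let $(u_h(t),q_h(t))\in V_h\times V_h$ be a (differentiable in $t$) solution on some time interval with $f(u_h)\ge 0$ on $\Omega$. Define the semi-discrete entropy $$E(t)=\sum_{j=1}^N\int_{I_j}\big(\Phi(x)u_h(x,t)+H(u_h(x,t))\big)\,dx .$$ If the flux parameters satisfy $\beta_0>\Gamma(\beta_1)$, where $$\Gamma(\beta_1):=\max_{1\le j\le N-1}\frac{\{f(u_h)\}\left(\{\partial_x q_h\}+\frac{\beta_1}{2}h[\partial_x^2 q_h]\right)^2\Big|_{x_{j+1/2}}}{\frac{1}{2h}\left(\int_{I_j}+\int_{I_{j+1}}\right)f(u_h)|\partial_x q_h|^2\,dx}$$ (with $h$ the interface mesh size at $x_{j+1/2}$ and all denominators assumed positive), then $$\frac{d}{dt}E(t)\le -\gamma\,\|q_h\|_E^2,\qquad \gamma=1-\sqrt{\Gamma(\beta_1)/\beta_0}\in(0,1).$$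
   Context: Let $\Omega=[a,b]$ with mesh $a=x_{1/2}<x_{3/2}<\dots<x_{N+1/2}=b$, cells $I_j=(x_{j-1/2},x_{j+1/2})$, $\Delta x_j=x_{j+1/2}-x_{j-1/2}$; at the interface $x_{j+1/2}$ the mesh size is $h=(\Delta x_j+\Delta x_{j+1})/2$ (on a uniform mesh $h=\Delta x$). For $k\ge 1$, $V_h=\{v\in L^2(\Omega): v|_{I_j}\in P^k(I_j),\ j=1,\dots,N\}$, $P^k$ being polynomials of degree at most $k$. At an interior interface, $v^\pm$ denote right/left limits, $[v]=v^+-v^-$, $\{v\}=(v^++v^-)/2$. Given functions $\Phi:\Omega\to\mathbb R$, $H:(0,\infty)\to\mathbb R$ ($C^1$) and $f\ge 0$, the semi-discrete DG scheme (for $\partial_t u=\partial_x(f(u)\partial_x q)$, $q=\Phi+H'(u)$) with zero-flux boundary conditions is: find $u_h(t),q_h(t)\in V_h$ such that for all $v,r\in V_h$, $$\int_\Omega \partial_t u_h\, v\,dx=-\sum_{j=1}^N\int_{I_j} f(u_h)\partial_x q_h\,\partial_x v\,dx-\sum_{j=1}^{N-1}\{f(u_h)\}\Big(\widehat{\partial_x q_h}\,[v]+\{\partial_x v\}[q_h]\Big)\Big|_{x_{j+1/2}},$$ $$\int_\Omega q_h r\,dx=\int_\Omega(\Phi(x)+H'(u_h))\,r\,dx,$$ with numerical flux at $x_{j+1/2}$: $\widehat{\partial_x q_h}=\beta_0\frac{[q_h]}{h}+\{\partial_x q_h\}+\beta_1 h[\partial_x^2 q_h]$, where $\beta_0,\beta_1$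 are real parameters. The energy norm is $$\|q_h\|_E^2=\sum_{j=1}^N\int_{I_j}f(u_h)|\partial_x q_h|^2dx+\sum_{j=1}^{N-1}\{f(u_h)\}\frac{\beta_0}{h}[q_h]^2\Big|_{x_{j+1/2}}.$$ *)

theory Defs
  imports "HOL-Analysis.Analysis" "HOL-Computational_Algebra.Polynomial"
begin

text \<open>Mesh: nodes xn 0 < xn 1 < ... < xn N, i.e. xn j is x_{j+1/2}; cell I_j = (xn (j-1), xn j),
  j = 1..N.  An element of V_h is represented by its family of cell polynomials v j (j = 1..N).\<close>

definition in_Vh :: "nat \<Rightarrow> nat \<Rightarrow> (nat \<Rightarrow> real poly) \<Rightarrow> bool" where
  "in_Vh k N v \<longleftrightarrow> (\<forall>j\<in>{1..N}. degree (v j) \<le> k)"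

definition cellint :: "(nat \<Rightarrow> real) \<Rightarrow> nat \<Rightarrow> (real \<Rightarrow> real) \<Rightarrow> real" where
  "cellint xn j g = integral {xn (j - 1)..xn j} g"

definition jump :: "(nat \<Rightarrow> real) \<Rightarrow> (nat \<Rightarrow> real poly) \<Rightarrow> nat \<Rightarrow> real" where
  "jump xn v j = poly (v (Suc j)) (xn j) - poly (v j) (xn j)"

definition avg :: "(nat \<Rightarrow> real) \<Rightarrow> (nat \<Rightarrow> real poly) \<Rightarrow> nat \<Rightarrow> real" where
  "avg xn v j = (poly (v (Suc j)) (xn j) + poly (v j) (xn j)) / 2"

definition avgf :: "(real \<Rightarrow> real) \<Rightarrow> (nat \<Rightarrow> real) \<Rightarrow> (nat \<Rightarrow> real poly) \<Rightarrow> nat \<Rightarrow> real" where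
  "avgf f xn u j = (f (poly (u (Suc j)) (xn j)) + f (poly (u j) (xn j))) / 2"

definition hI :: "(nat \<Rightarrow> real) \<Rightarrow> nat \<Rightarrow> real" where
  "hI xn j = ((xn j - xn (j - 1)) + (xn (Suc j) - xn j)) / 2"

definition dx :: "(nat \<Rightarrow> real poly) \<Rightarrow> nat \<Rightarrow> real poly" where
  "dx v = (\<lambda>j. pderiv (v j))"

definition flux :: "(nat \<Rightarrow> real) \<Rightarrow> real \<Rightarrow> real \<Rightarrow> (nat \<Rightarrow> real poly) \<Rightarrow> nat \<Rightarrow> real" where
  "flux xn \<beta>0 \<beta>1 q j =
     \<beta>0 * jump xn q j / hI xn j + avg xn (dx q) j + \<beta>1 * hI xn j * jump xn (dx (dx q)) j"

definition DGform :: "(real \<Rightarrow> real) \<Rightarrow> (nat \<Rightarrow> real) \<Rightarrow> nat \<Rightarrow> real \<Rightarrow> real \<Rightarrow>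
    (nat \<Rightarrow> real poly) \<Rightarrow> (nat \<Rightarrow> real poly) \<Rightarrow> (nat \<Rightarrow> real poly) \<Rightarrow> real" where
  "DGform f xn N \<beta>0 \<beta>1 u q v =
     - (\<Sum>j=1..N. cellint xn j (\<lambda>x. f (poly (u j) x) * poly (dx q j) x * poly (dx v j) x))
     - (\<Sum>j=1..N-1. avgf f xn u j *
          (flux xn \<beta>0 \<beta>1 q j * jump xn v j + avg xn (dx v) j * jump xn q j))"

definition energy2 :: "(real \<Rightarrow> real) \<Rightarrow> (nat \<Rightarrow> real) \<Rightarrow> nat \<Rightarrow> real \<Rightarrow>
    (nat \<Rightarrow> real poly) \<Rightarrow> (nat \<Rightarrow> real poly) \<Rightarrow> real" where
  "energy2 f xn N \<beta>0 u q =
     (\<Sum>j=1..N. cellint xn j (\<lambda>x. f (poly (u j) x) * (poly (dx q j) x)\<^sup>2))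
     + (\<Sum>j=1..N-1. avgf f xn u j * \<beta>0 / hI xn j * (jump xn q j)\<^sup>2)"

definition Gnum :: "(real \<Rightarrow> real) \<Rightarrow> (nat \<Rightarrow> real) \<Rightarrow> real \<Rightarrow>
    (nat \<Rightarrow> real poly) \<Rightarrow> (nat \<Rightarrow> real poly) \<Rightarrow> nat \<Rightarrow> real" where
  "Gnum f xn \<beta>1 u q j =
     avgf f xn u j * (avg xn (dx q) j + \<beta>1 / 2 * hI xn j * jump xn (dx (dx q)) j)\<^sup>2"

definition Gden :: "(real \<Rightarrow> real) \<Rightarrow> (nat \<Rightarrow> real) \<Rightarrow>
    (nat \<Rightarrow> real poly) \<Rightarrow> (nat \<Rightarrow> real poly) \<Rightarrow> nat \<Rightarrow> real" where
  "Gden f xn u q j =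
     1 / (2 * hI xn j) *
       (cellint xn j (\<lambda>x. f (poly (u j) x) * (poly (dx q j) x)\<^sup>2)
        + cellint xn (Suc j) (\<lambda>x. f (poly (u (Suc j)) x) * (poly (dx q (Suc j)) x)\<^sup>2))"

definition Gamma :: "(real \<Rightarrow> real) \<Rightarrow> (nat \<Rightarrow> real) \<Rightarrow> nat \<Rightarrow> real \<Rightarrow>
    (nat \<Rightarrow> real poly) \<Rightarrow> (nat \<Rightarrow> real poly) \<Rightarrow> real" where
  "Gamma f xn N \<beta>1 u q = Max ((\<lambda>j. Gnum f xn \<beta>1 u q j / Gden f xn u q j) ` {1..N-1})"

definition entropy :: "(real \<Rightarrow> real) \<Rightarrow> (real \<Rightarrow> real) \<Rightarrow> (nat \<Rightarrow> real) \<Rightarrow> nat \<Rightarrow>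
    (nat \<Rightarrow> real poly) \<Rightarrow> real" where
  "entropy \<Phi> H xn N u =
     (\<Sum>j=1..N. cellint xn j (\<lambda>x. \<Phi> x * poly (u j) x + H (poly (u j) x)))"

end

theory Submission
  imports Defs
begin

text \<open>Testing the first DG equation with \<open>v = q_h\<close> and the second with \<open>r = d_t u_h\<close> identifies
  the entropy derivative with the DG form at \<open>(q_h, q_h)\<close>. That form is \<open>-||q_h||_E^2\<close> minus, at each
  interior interface, a cross term \<open>2{f(u_h)}[q_h]w\<close> with \<open>w = {d_x q_h} + beta_1 h [d_x^2 q_h]/2\<close>.
  By the definition of \<open>Gamma\<close>, \<open>{f(u_h)} w^2\<close> is at most \<open>Gamma\<close> times the mean energy density of the
  two adjacent cells, so a weighted AM-GM inequality with \<open>rho = sqrt(Gamma/beta_0)\<close> absorbs the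
  cross term into a \<open>rho\<close>-fraction of the jump penalty plus a \<open>rho/2\<close>-fraction of the two cell
  energies; since every cell borders at most two interfaces, the total loss is at most
  \<open>rho ||q_h||_E^2\<close>. The entropy may be differentiated under the integral because on each cell the
  difference quotients of the integrand converge uniformly: \<open>u_h\<close> is a polynomial with
  differentiable coefficients, and \<open>H\<close> is \<open>C^1\<close> near the compact range of \<open>u_h\<close>.\<close>

lemma uniform_limit_sum:
  fixes f :: "'i \<Rightarrow> 'a \<Rightarrow> 'b \<Rightarrow> 'c::real_normed_vector"
  assumes "finite I" "\<And>i. i \<in> I \<Longrightarrow> uniform_limit S (f i) (g i) F"
  shows "uniform_limit S (\<lambda>s x. \<Sum>i\<in>I. f i s x) (\<lambda>x. \<Sum>i\<in>I. g i x) F"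
  using assms
  by (induction I rule: finite_induct) (auto intro: uniform_limit_add uniform_limit_const[where c="\<lambda>_. 0"])

lemma uniform_limit_poly:
  fixes p :: "'a \<Rightarrow> real poly" and S :: "real set"
  assumes deg: "\<forall>\<^sub>F s in F. degree (p s) \<le> k" and "degree p0 \<le> k"
    and coeff: "\<And>i. ((\<lambda>s. coeff (p s) i) \<longlongrightarrow> coeff p0 i) F"
    and S: "bounded S"
  shows "uniform_limit S (\<lambda>s. poly (p s)) (poly p0) F"
proof -
  have poly_sum: "poly q x = (\<Sum>i\<le>k. coeff q i * x ^ i)" if "degree q \<le> k" for q :: "real poly" and x
    unfolding poly_altdef using that by (intro sum.mono_neutral_left) (auto simp: coeff_eq_0)
  have "uniform_limit S (\<lambda>s x. \<Sum>i\<le>k. coeff (p s) i * x ^ i) (\<lambda>x. \<Sum>i\<le>k. coeff p0 i * x ^ i) F"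
  proof (intro uniform_limit_sum uniform_lim_mult)
    fix i
    show "uniform_limit S (\<lambda>s x. coeff (p s) i) (\<lambda>x. coeff p0 i) F"
      using coeff[of i] by (simp add: uniform_limit_iff tendsto_iff)
    show "bounded ((\<lambda>x. x ^ i) ` S)"
    proof -
      have "compact ((\<lambda>x. x ^ i) ` closure S)"
        using S by (intro compact_continuous_image continuous_intros) (simp add: compact_closure)
      then show ?thesis
        by (rule bounded_subset[OF compact_imp_bounded]) (intro image_mono closure_subset)
    qed
  qed (auto intro: bounded_subset[of "{c}" for c] uniform_limit_const[where c="\<lambda>x. x ^ i" for i])
  then show ?thesis
    using deg \<open>degree p0 \<le> k\<close>
    by (subst uniform_limit_cong[where g="\<lambda>s x. \<Sum>i\<le>k. coeff (p s) i * x ^ i"])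
       (auto elim: eventually_mono simp: poly_sum)
qed

lemma uniform_limit_poly_diff_quotient:
  fixes p :: "real \<Rightarrow> real poly" and S :: "real set"
  assumes deg: "\<forall>\<^sub>F s in at t. degree (p s) \<le> k" "degree (p t) \<le> k" "degree pd \<le> k"
    and der: "\<And>i. ((\<lambda>s. coeff (p s) i) has_real_derivative coeff pd i) (at t)"
    and S: "bounded S"
  shows "uniform_limit S (\<lambda>s x. (poly (p s) x - poly (p t) x) / (s - t)) (poly pd) (at t)"
proof -
  define q where "q s = smult (inverse (s - t)) (p s - p t)" for s
  have "uniform_limit S (\<lambda>s x. poly (q s) x) (poly pd) (at t)"
  proof (rule uniform_limit_poly[OF _ \<open>degree pd \<le> k\<close> _ S])
    show "\<forall>\<^sub>F s in at t. degree (q s) \<le> k"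
      using deg(1) by eventually_elim
        (use deg(2) in \<open>auto simp: q_def intro: order.trans[OF degree_diff_le]\<close>)
    show "((\<lambda>s. coeff (q s) i) \<longlongrightarrow> coeff pd i) (at t)" for i
      using der[of i] by (simp add: q_def has_field_derivative_iff divide_inverse mult.commute)
  qed
  then show ?thesis
    by (simp add: q_def divide_inverse mult.commute)
qed

lemma has_real_derivative_integral_uniform_limit:
  fixes g :: "real \<Rightarrow> real \<Rightarrow> real"
  assumes cont: "\<forall>\<^sub>F s in at t. continuous_on {a..b} (g s)" "continuous_on {a..b} (g t)"
    and lim: "uniform_limit {a..b} (\<lambda>s x. (g s x - g t x) / (s - t)) G (at t)"
  shows "((\<lambda>s. integral {a..b} (g s)) has_real_derivative integral {a..b} G) (at t)"
proof -
  \<comment> \<open>the library's limit theorem needs continuous quotients for every parameter value\<close>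
  define q where "q s x = (if continuous_on {a..b} (g s) then (g s x - g t x) / (s - t) else 0)" for s x
  have "uniform_limit {a..b} q G (at t)"
    using lim by (rule uniform_limit_cong[THEN iffD1, rotated -1])
      (use cont(1) in \<open>auto simp: q_def elim: eventually_mono\<close>)
  moreover have "continuous_on {a..b} (q s)" for s
    using cont(2) by (cases "continuous_on {a..b} (g s)")
      (auto simp: q_def divide_inverse intro!: continuous_intros)
  ultimately obtain I J where I: "\<And>s. (q s has_integral I s) {a..b}"
    and J: "(G has_integral J) {a..b}" and IJ: "(I \<longlongrightarrow> J) (at t)"
    by (rule uniform_limit_integral) auto
  have "\<forall>\<^sub>F s in at t. I s = (integral {a..b} (g s) - integral {a..b} (g t)) / (s - t)"
    using cont(1)
  proof eventually_elim
    case (elim s)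
    then have "q s = (\<lambda>x. (g s x - g t x) / (s - t))"
      by (simp add: q_def fun_eq_iff)
    moreover have "((\<lambda>x. (g s x - g t x) / (s - t)) has_integral
        (integral {a..b} (g s) - integral {a..b} (g t)) / (s - t)) {a..b}"
      using elim cont(2) by (intro has_integral_divide has_integral_diff
          integrable_integral integrable_continuous_interval)
    ultimately have "(q s has_integral (integral {a..b} (g s) - integral {a..b} (g t)) / (s - t)) {a..b}"
      by simp
    then show ?case by (rule has_integral_unique[OF I])
  qed
  with IJ have "((\<lambda>s. (integral {a..b} (g s) - integral {a..b} (g t)) / (s - t)) \<longlongrightarrow> J) (at t)"
    by (rule Lim_transform_eventually)
  then show ?thesis
    using integral_unique[OF J] by (simp add: has_field_derivative_iff)
qed

lemma real_mvt_between:
  fixes H Hd :: "real \<Rightarrow> real"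
  assumes "\<And>z. \<bar>z - y0\<bar> \<le> \<bar>y - y0\<bar> \<Longrightarrow> (H has_real_derivative Hd z) (at z)"
  obtains \<xi> where "\<bar>\<xi> - y0\<bar> \<le> \<bar>y - y0\<bar>" "H y - H y0 = (y - y0) * Hd \<xi>"
proof (cases y y0 rule: linorder_cases)
  case less
  then obtain z where "y < z" "z < y0" "H y0 - H y = (y0 - y) * Hd z"
    using MVT2[OF less, of H Hd] assms by force
  then show ?thesis by (intro that[of z]) (auto simp: algebra_simps)
next
  case greater
  then obtain z where "y0 < z" "z < y" "H y - H y0 = (y - y0) * Hd z"
    using MVT2[OF greater, of H Hd] assms by force
  then show ?thesis by (intro that[of z]) auto
qed (use that in auto)

lemma uniform_linearization_on_compact:
  fixes H Hd :: "real \<Rightarrow> real"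
  assumes X: "open X" "compact K" "K \<subseteq> X"
    and H: "\<And>y. y \<in> X \<Longrightarrow> (H has_real_derivative Hd y) (at y)"
    and Hd: "continuous_on X Hd" and e: "0 < e"
  obtains d where "0 < d"
    "\<And>y0 y. y0 \<in> K \<Longrightarrow> \<bar>y - y0\<bar> < d \<Longrightarrow> \<bar>H y - H y0 - Hd y0 * (y - y0)\<bar> \<le> e * \<bar>y - y0\<bar>"
proof -
  obtain r where r: "0 < r" "\<And>y. y \<in> K \<Longrightarrow> ball y r \<subseteq> X"
    using Heine_Borel_lemma[of K "{X}"] X by auto
  define K' where "K' = {y + z | y z. y \<in> K \<and> z \<in> cball 0 (r/2)}"
  have near: "z \<in> K'" if "y0 \<in> K" "\<bar>z - y0\<bar> \<le> r/2" for y0 z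
    unfolding K'_def using that by (intro CollectI exI[of _ y0] exI[of _ "z - y0"]) auto
  have "K' \<subseteq> X"
    using r by (force simp: K'_def dist_real_def)
  moreover have "compact K'"
    unfolding K'_def by (intro compact_sums X(2) compact_cball)
  ultimately have "uniformly_continuous_on K' Hd"
    by (intro compact_uniformly_continuous continuous_on_subset[OF Hd])
  then obtain d1 where d1: "0 < d1"
    "\<And>x x'. x \<in> K' \<Longrightarrow> x' \<in> K' \<Longrightarrow> dist x' x < d1 \<Longrightarrow> dist (Hd x') (Hd x) < e"
    using e unfolding uniformly_continuous_on_def by metis
  show ?thesis
  proof (rule that[of "min d1 (r/2)"])
    fix y0 y assume y0: "y0 \<in> K" and y: "\<bar>y - y0\<bar> < min d1 (r/2)"
    have "z \<in> X" if "\<bar>z - y0\<bar> \<le> \<bar>y - y0\<bar>" for z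
      using that y near[OF y0] \<open>K' \<subseteq> X\<close> by force
    then obtain \<xi> where \<xi>: "\<bar>\<xi> - y0\<bar> \<le> \<bar>y - y0\<bar>" and mvt: "H y - H y0 = (y - y0) * Hd \<xi>"
      using real_mvt_between[of y0 y H Hd] H by blast
    have "\<bar>Hd \<xi> - Hd y0\<bar> < e"
      using d1(2)[of y0 \<xi>] near[OF y0] y0 \<xi> y by (auto simp: dist_real_def)
    then have "\<bar>Hd \<xi> - Hd y0\<bar> * \<bar>y - y0\<bar> \<le> e * \<bar>y - y0\<bar>"
      by (intro mult_right_mono) auto
    moreover have "H y - H y0 - Hd y0 * (y - y0) = (Hd \<xi> - Hd y0) * (y - y0)"
      using mvt by (simp add: algebra_simps)
    ultimately show "\<bar>H y - H y0 - Hd y0 * (y - y0)\<bar> \<le> e * \<bar>y - y0\<bar>"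
      by (simp add: abs_mult)
  qed (use r d1 in auto)
qed

lemma uniform_limit_eventually_abs_le:
  fixes f :: "'b \<Rightarrow> 'a \<Rightarrow> real"
  assumes lim: "uniform_limit S f G F" and G: "\<And>x. x \<in> S \<Longrightarrow> \<bar>G x\<bar> \<le> B"
  shows "\<forall>\<^sub>F s in F. \<forall>x\<in>S. \<bar>f s x\<bar> \<le> B + 1"
  using uniform_limitD[OF lim zero_less_one]
proof eventually_elim
  case (elim s)
  show ?case
  proof
    fix x assume "x \<in> S"
    with elim have "\<bar>f s x - G x\<bar> < 1"
      by (simp add: dist_real_def)
    with G[OF \<open>x \<in> S\<close>] show "\<bar>f s x\<bar> \<le> B + 1"
      by linarith
  qed
qed

lemma uniform_limit_linearization_remainder:
  fixes g :: "real \<Rightarrow> 'a \<Rightarrow> real" and H Hd :: "real \<Rightarrow> real"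
  assumes X: "open X" "compact (g t ` S)" "g t ` S \<subseteq> X"
    and H: "\<And>y. y \<in> X \<Longrightarrow> (H has_real_derivative Hd y) (at y)" and Hd: "continuous_on X Hd"
    and B: "0 < B" and bounded: "\<forall>\<^sub>F s in at t. \<forall>x\<in>S. \<bar>(g s x - g t x) / (s - t)\<bar> \<le> B"
  shows "uniform_limit S (\<lambda>s x. (H (g s x) - H (g t x) - Hd (g t x) * (g s x - g t x)) / (s - t))
           (\<lambda>_. 0) (at t)"
proof (rule uniform_limitI)
  fix e :: real assume e: "0 < e"
  obtain d where d: "0 < d" and lin: "\<And>y0 y. y0 \<in> g t ` S \<Longrightarrow> \<bar>y - y0\<bar> < d \<Longrightarrow>
      \<bar>H y - H y0 - Hd y0 * (y - y0)\<bar> \<le> e / (2 * B) * \<bar>y - y0\<bar>"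
    using uniform_linearization_on_compact[OF X H Hd, of "e / (2 * B)"] e B by auto
  have "\<forall>\<^sub>F s in at t. s \<noteq> t \<and> \<bar>s - t\<bar> < d / B"
    using d B by (auto simp: eventually_at dist_real_def intro!: exI[of _ "d / B"])
  with bounded show "\<forall>\<^sub>F s in at t. \<forall>x\<in>S.
      dist ((H (g s x) - H (g t x) - Hd (g t x) * (g s x - g t x)) / (s - t)) 0 < e"
  proof eventually_elim
    case (elim s)
    show ?case
    proof
      fix x assume x: "x \<in> S"
      define Dq where "Dq = (g s x - g t x) / (s - t)"
      have Dq: "\<bar>Dq\<bar> \<le> B" using elim(1) x by (simp add: Dq_def)
      have diff: "g s x - g t x = (s - t) * Dq" using elim(2) by (simp add: Dq_def)
      have "\<bar>g s x - g t x\<bar> \<le> \<bar>s - t\<bar> * B"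
        unfolding diff abs_mult using Dq by (intro mult_left_mono) auto
      also have "\<dots> < d" using elim(2) B by (simp add: field_simps)
      finally have "\<bar>H (g s x) - H (g t x) - Hd (g t x) * (g s x - g t x)\<bar>
          \<le> e / (2 * B) * \<bar>g s x - g t x\<bar>"
        by (rule lin[OF imageI[OF x]])
      then have "\<bar>H (g s x) - H (g t x) - Hd (g t x) * (g s x - g t x)\<bar> / \<bar>s - t\<bar>
          \<le> e / (2 * B) * \<bar>g s x - g t x\<bar> / \<bar>s - t\<bar>"
        by (rule divide_right_mono) simp
      also have "\<dots> = e / (2 * B) * \<bar>Dq\<bar>"
        using elim(2) by (simp add: diff abs_mult)
      also have "\<dots> \<le> e / (2 * B) * B"
        using Dq e B by (intro mult_left_mono) auto
      also have "\<dots> < e" using e B by simp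
      finally show "dist ((H (g s x) - H (g t x) - Hd (g t x) * (g s x - g t x)) / (s - t)) 0 < e"
        by (simp add: abs_divide)
    qed
  qed
qed

lemma uniform_limit_diff_quotient_compose:
  fixes g :: "real \<Rightarrow> 'a \<Rightarrow> real" and H Hd :: "real \<Rightarrow> real"
  assumes X: "open X" "compact (g t ` S)" "g t ` S \<subseteq> X"
    and H: "\<And>y. y \<in> X \<Longrightarrow> (H has_real_derivative Hd y) (at y)" and Hd: "continuous_on X Hd"
    and lim: "uniform_limit S (\<lambda>s x. (g s x - g t x) / (s - t)) G (at t)"
    and G: "bounded (G ` S)"
  shows "uniform_limit S (\<lambda>s x. (H (g s x) - H (g t x)) / (s - t)) (\<lambda>x. Hd (g t x) * G x) (at t)"
proof -
  obtain B where "0 < B" "\<And>x. x \<in> S \<Longrightarrow> \<bar>G x\<bar> \<le> B"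
    using G by (auto simp: bounded_pos)
  then have "uniform_limit S (\<lambda>s x. (H (g s x) - H (g t x) - Hd (g t x) * (g s x - g t x)) / (s - t))
      (\<lambda>_. 0) (at t)"
    by (intro uniform_limit_linearization_remainder[where g=g and t=t and S=S and B="B + 1", OF X H Hd]
        uniform_limit_eventually_abs_le[OF lim]) auto
  moreover have "bounded ((\<lambda>x. Hd (g t x)) ` S)"
    using X by (metis compact_continuous_image compact_imp_bounded continuous_on_subset Hd image_image)
  then have "uniform_limit S (\<lambda>s x. Hd (g t x) * ((g s x - g t x) / (s - t))) (\<lambda>x. Hd (g t x) * G x) (at t)"
    using G by (intro uniform_lim_mult lim uniform_limit_const[where c="\<lambda>x. Hd (g t x)"])
  ultimately have "uniform_limit S (\<lambda>s x. (H (g s x) - H (g t x) - Hd (g t x) * (g s x - g t x)) / (s - t)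
      + Hd (g t x) * ((g s x - g t x) / (s - t))) (\<lambda>x. 0 + Hd (g t x) * G x) (at t)"
    by (rule uniform_limit_add)
  then show ?thesis
    by (simp flip: add_divide_distrib)
qed

lemma has_real_derivative_integral_entropy_density:
  fixes p :: "real \<Rightarrow> real poly" and \<Phi> H Hd :: "real \<Rightarrow> real"
  assumes X: "open X"
    and H: "\<And>y. y \<in> X \<Longrightarrow> (H has_real_derivative Hd y) (at y)" and Hd: "continuous_on X Hd"
    and \<Phi>: "continuous_on {a..b} \<Phi>"
    and range: "\<forall>\<^sub>F s in at t. \<forall>x\<in>{a..b}. poly (p s) x \<in> X" "\<forall>x\<in>{a..b}. poly (p t) x \<in> X"
    and deg: "\<forall>\<^sub>F s in at t. degree (p s) \<le> k" "degree (p t) \<le> k" "degree pd \<le> k"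
    and der: "\<And>i. ((\<lambda>s. coeff (p s) i) has_real_derivative coeff pd i) (at t)"
  shows "((\<lambda>s. integral {a..b} (\<lambda>x. \<Phi> x * poly (p s) x + H (poly (p s) x))) has_real_derivative
           integral {a..b} (\<lambda>x. (\<Phi> x + Hd (poly (p t) x)) * poly pd x)) (at t)"
proof (rule has_real_derivative_integral_uniform_limit)
  have "continuous_on X H"
    using H by (intro continuous_at_imp_continuous_on ballI DERIV_isCont) auto
  then have cont: "continuous_on {a..b} (\<lambda>x. \<Phi> x * poly (p s) x + H (poly (p s) x))"
    if "\<forall>x\<in>{a..b}. poly (p s) x \<in> X" for s
  proof -
    have "continuous_on {a..b} (\<lambda>x. H (poly (p s) x))"
      using \<open>continuous_on X H\<close> by (rule continuous_on_compose2)
        (use that in \<open>auto intro: continuous_intros\<close>)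
    then show ?thesis by (intro continuous_intros \<Phi>)
  qed
  show "\<forall>\<^sub>F s in at t. continuous_on {a..b} (\<lambda>x. \<Phi> x * poly (p s) x + H (poly (p s) x))"
    using range(1) by (rule eventually_mono) (rule cont)
  show "continuous_on {a..b} (\<lambda>x. \<Phi> x * poly (p t) x + H (poly (p t) x))"
    using range(2) by (rule cont)
  have poly_lim: "uniform_limit {a..b} (\<lambda>s x. (poly (p s) x - poly (p t) x) / (s - t)) (poly pd) (at t)"
    using deg der by (rule uniform_limit_poly_diff_quotient) simp
  have bounded: "bounded (f ` {a..b})" if "continuous_on {a..b} f" for f :: "real \<Rightarrow> real"
    using that by (intro compact_imp_bounded compact_continuous_image) auto
  have quotient_regroup: "c * ((u - v) / d) + (w - z) / d = (c * u + w - (c * v + z)) / d"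
    for c u v w z d :: real
    by (simp add: diff_divide_distrib add_divide_distrib algebra_simps)
  have "bounded (poly pd ` {a..b})" "bounded (\<Phi> ` {a..b})"
    using \<Phi> by (auto intro!: bounded continuous_intros)
  then have "uniform_limit {a..b} (\<lambda>s x. \<Phi> x * ((poly (p s) x - poly (p t) x) / (s - t)))
      (\<lambda>x. \<Phi> x * poly pd x) (at t)"
    by (intro uniform_lim_mult[OF uniform_limit_const[where c=\<Phi>] poly_lim])
  moreover have "uniform_limit {a..b} (\<lambda>s x. (H (poly (p s) x) - H (poly (p t) x)) / (s - t))
      (\<lambda>x. Hd (poly (p t) x) * poly pd x) (at t)"
    using range(2) \<open>bounded (poly pd ` {a..b})\<close>
    by (intro uniform_limit_diff_quotient_compose[OF X _ _ H Hd poly_lim]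
        compact_continuous_image continuous_intros) auto
  ultimately have "uniform_limit {a..b} (\<lambda>s x. \<Phi> x * ((poly (p s) x - poly (p t) x) / (s - t))
        + (H (poly (p s) x) - H (poly (p t) x)) / (s - t))
      (\<lambda>x. \<Phi> x * poly pd x + Hd (poly (p t) x) * poly pd x) (at t)"
    by (rule uniform_limit_add)
  then show "uniform_limit {a..b}
      (\<lambda>s x. (\<Phi> x * poly (p s) x + H (poly (p s) x) - (\<Phi> x * poly (p t) x + H (poly (p t) x))) / (s - t))
      (\<lambda>x. (\<Phi> x + Hd (poly (p t) x)) * poly pd x) (at t)"
    by (simp only: quotient_regroup distrib_right)
qed

lemma mesh_mono:
  assumes mesh: "\<forall>j<N. xn j < xn (Suc j)" and "i \<le> j" "j \<le> N"
  shows "xn i \<le> (xn j :: real)"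
  using assms(2,3)
proof (induction j rule: dec_induct)
  case (step j)
  then show ?case using mesh by (meson Suc_le_lessD less_imp_le order.trans)
qed simp

lemma hI_pos:
  assumes mesh: "\<forall>j<N. xn j < xn (Suc j)" and j: "j \<in> {1..N-1}"
  shows "0 < hI xn j"
proof -
  have "xn (j - 1) < xn j" "xn j < xn (Suc j)"
    using mesh j by (auto dest: spec[of _ "j - 1"] spec[of _ j])
  then show ?thesis by (simp add: hI_def)
qed

lemma entropy_has_real_derivative:
  fixes U :: "real \<Rightarrow> nat \<Rightarrow> real poly" and ut :: "nat \<Rightarrow> real poly"
  assumes mesh: "\<forall>j<N. xn j < xn (Suc j)"
    and H: "\<forall>y>0. (H has_real_derivative Hd y) (at y)" and Hd: "continuous_on {0<..} Hd"
    and \<Phi>: "continuous_on {xn 0..xn N} \<Phi>"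
    and T: "open T" "t \<in> T"
    and Vh: "\<forall>s\<in>T. in_Vh k N (U s)" "in_Vh k N ut"
    and pos: "\<forall>s\<in>T. \<forall>j\<in>{1..N}. \<forall>x\<in>{xn (j - 1)..xn j}. 0 < poly (U s j) x"
    and der: "\<forall>j\<in>{1..N}. \<forall>i. ((\<lambda>s. coeff (U s j) i) has_real_derivative coeff (ut j) i) (at t)"
  shows "((\<lambda>s. entropy \<Phi> H xn N (U s)) has_real_derivative
           (\<Sum>j=1..N. cellint xn j (\<lambda>x. (\<Phi> x + Hd (poly (U t j) x)) * poly (ut j) x))) (at t)"
  unfolding entropy_def cellint_def
proof (rule DERIV_sum)
  fix j assume j: "j \<in> {1..N}"
  have near_t: "\<forall>\<^sub>F s in at t. s \<in> T"
    using eventually_at_in_open'[OF T] .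
  show "((\<lambda>s. integral {xn (j - 1)..xn j} (\<lambda>x. \<Phi> x * poly (U s j) x + H (poly (U s j) x)))
      has_real_derivative integral {xn (j - 1)..xn j}
        (\<lambda>x. (\<Phi> x + Hd (poly (U t j) x)) * poly (ut j) x)) (at t)"
  proof (rule has_real_derivative_integral_entropy_density[where X="{0<..}" and k=k])
    show "continuous_on {xn (j - 1)..xn j} \<Phi>"
      using j by (intro continuous_on_subset[OF \<Phi>]) (auto intro: mesh_mono[OF mesh])
    show "\<forall>\<^sub>F s in at t. \<forall>x\<in>{xn (j - 1)..xn j}. poly (U s j) x \<in> {0<..}"
      using near_t by eventually_elim (use pos j in auto)
    show "\<forall>\<^sub>F s in at t. degree (U s j) \<le> k"
      using near_t by eventually_elim (use Vh j in \<open>auto simp: in_Vh_def\<close>)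
  qed (use H Hd T Vh pos der j in \<open>auto simp: in_Vh_def\<close>)
qed

lemma interface_absorption:
  fixes c h \<beta>0 \<Gamma> S J w :: real
  assumes c: "0 \<le> c" and h: "0 < h" and \<beta>0: "0 < \<beta>0" and \<Gamma>: "0 \<le> \<Gamma>"
    and bound: "c * w\<^sup>2 \<le> \<Gamma> * (S / (2 * h))"
  shows "- (c * (2 * J * w)) \<le> sqrt (\<Gamma> / \<beta>0) * (c * \<beta>0 / h * J\<^sup>2) + sqrt (\<Gamma> / \<beta>0) / 2 * S"
proof (cases "\<Gamma> = 0")
  case True
  moreover have "0 \<le> c * w\<^sup>2"
    using c by simp
  ultimately have "c * w\<^sup>2 = 0"
    using bound by simp
  then show ?thesis
    using True by (auto simp: power2_eq_square)
next
  case False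
  define \<rho> where "\<rho> = sqrt (\<Gamma> / \<beta>0)"
  have \<rho>: "0 < \<rho>" and \<Gamma>_eq: "\<Gamma> = \<rho>\<^sup>2 * \<beta>0"
    using False \<Gamma> \<beta>0 by (auto simp: \<rho>_def)
  \<comment> \<open>weighted AM-GM, the weight chosen so that the jump term gets the factor \<rho>\<close>
  have "0 \<le> c * (\<rho> * \<beta>0 * J + h * w)\<^sup>2 / (\<rho> * \<beta>0 * h)"
    using c \<rho> \<beta>0 h by simp
  also have "\<dots> = \<rho> * (c * \<beta>0 / h * J\<^sup>2) + h * (c * w\<^sup>2) / (\<rho> * \<beta>0) + c * (2 * J * w)"
    using \<rho> \<beta>0 h by (simp add: field_simps power2_eq_square)
  also have "h * (c * w\<^sup>2) / (\<rho> * \<beta>0) \<le> h * (\<Gamma> * (S / (2 * h))) / (\<rho> * \<beta>0)"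
    using bound h \<rho> \<beta>0 by (intro divide_right_mono mult_left_mono) auto
  also have "\<dots> = \<rho> / 2 * S"
    using \<rho> \<beta>0 h by (simp add: \<Gamma>_eq field_simps power2_eq_square)
  finally show ?thesis by (simp add: \<rho>_def)
qed

lemma sum_adjacent_le_twice_sum:
  fixes A :: "nat \<Rightarrow> real"
  assumes "\<And>j. j \<in> {1..N} \<Longrightarrow> 0 \<le> A j"
  shows "(\<Sum>j=1..N-1. A j + A (Suc j)) \<le> 2 * (\<Sum>j=1..N. A j)"
proof -
  have "(\<Sum>j=1..N-1. A j) \<le> (\<Sum>j=1..N. A j)"
    using assms by (intro sum_mono2) auto
  moreover have "(\<Sum>j=1..N-1. A (Suc j)) = (\<Sum>j=Suc 1..Suc (N-1). A j)"
    by (rule sum.shift_bounds_cl_Suc_ivl[symmetric])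
  moreover have "\<dots> \<le> (\<Sum>j=1..N. A j)"
    using assms by (intro sum_mono2) auto
  ultimately show ?thesis by (simp add: sum.distrib)
qed

lemma discrete_energy_dissipation:
  fixes A c h J w :: "nat \<Rightarrow> real" and \<beta>0 \<Gamma> :: real
  assumes A: "\<And>j. j \<in> {1..N} \<Longrightarrow> 0 \<le> A j"
    and c: "\<And>j. j \<in> {1..N-1} \<Longrightarrow> 0 \<le> c j" and h: "\<And>j. j \<in> {1..N-1} \<Longrightarrow> 0 < h j"
    and \<beta>0: "0 < \<beta>0" and \<Gamma>: "0 \<le> \<Gamma>"
    and bound: "\<And>j. j \<in> {1..N-1} \<Longrightarrow> c j * (w j)\<^sup>2 \<le> \<Gamma> * ((A j + A (Suc j)) / (2 * h j))"
  shows "- ((\<Sum>j=1..N. A j) + (\<Sum>j=1..N-1. c j * \<beta>0 / h j * (J j)\<^sup>2)) - (\<Sum>j=1..N-1. c j * (2 * J j * w j))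
    \<le> - (1 - sqrt (\<Gamma> / \<beta>0)) * ((\<Sum>j=1..N. A j) + (\<Sum>j=1..N-1. c j * \<beta>0 / h j * (J j)\<^sup>2))"
proof -
  define \<rho> where "\<rho> = sqrt (\<Gamma> / \<beta>0)"
  have "(\<Sum>j=1..N-1. - (c j * (2 * J j * w j)))
      \<le> (\<Sum>j=1..N-1. \<rho> * (c j * \<beta>0 / h j * (J j)\<^sup>2) + \<rho> / 2 * (A j + A (Suc j)))"
    unfolding \<rho>_def using c h \<beta>0 \<Gamma> bound by (intro sum_mono interface_absorption) auto
  also have "\<dots> = \<rho> * (\<Sum>j=1..N-1. c j * \<beta>0 / h j * (J j)\<^sup>2) + \<rho> / 2 * (\<Sum>j=1..N-1. A j + A (Suc j))"
    by (simp only: sum.distrib sum_distrib_left distrib_left)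
  also have "\<rho> / 2 * (\<Sum>j=1..N-1. A j + A (Suc j)) \<le> \<rho> / 2 * (2 * (\<Sum>j=1..N. A j))"
    using A \<beta>0 \<Gamma> by (intro mult_left_mono sum_adjacent_le_twice_sum) (auto simp: \<rho>_def)
  finally show ?thesis
    by (simp add: \<rho>_def sum_negf algebra_simps)
qed

definition cell_energy :: "(real \<Rightarrow> real) \<Rightarrow> (nat \<Rightarrow> real) \<Rightarrow> (nat \<Rightarrow> real poly) \<Rightarrow>
    (nat \<Rightarrow> real poly) \<Rightarrow> nat \<Rightarrow> real" where
  "cell_energy f xn u q j = cellint xn j (\<lambda>x. f (poly (u j) x) * (poly (dx q j) x)\<^sup>2)"

definition mean_flux :: "(nat \<Rightarrow> real) \<Rightarrow> real \<Rightarrow> (nat \<Rightarrow> real poly) \<Rightarrow> nat \<Rightarrow> real" where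
  "mean_flux xn \<beta>1 q j = avg xn (dx q) j + \<beta>1 / 2 * hI xn j * jump xn (dx (dx q)) j"

lemma energy2_eq:
  "energy2 f xn N \<beta>0 u q = (\<Sum>j=1..N. cell_energy f xn u q j)
     + (\<Sum>j=1..N-1. avgf f xn u j * \<beta>0 / hI xn j * (jump xn q j)\<^sup>2)"
  by (simp add: energy2_def cell_energy_def)

lemma DGform_diagonal:
  "DGform f xn N \<beta>0 \<beta>1 u q q = - energy2 f xn N \<beta>0 u q
     - (\<Sum>j=1..N-1. avgf f xn u j * (2 * jump xn q j * mean_flux xn \<beta>1 q j))"
proof -
  have "(\<Sum>j=1..N-1. avgf f xn u j *
          (flux xn \<beta>0 \<beta>1 q j * jump xn q j + avg xn (dx q) j * jump xn q j))
      = (\<Sum>j=1..N-1. avgf f xn u j * \<beta>0 / hI xn j * (jump xn q j)\<^sup>2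
          + avgf f xn u j * (2 * jump xn q j * mean_flux xn \<beta>1 q j))"
    by (intro sum.cong) (simp_all add: flux_def mean_flux_def field_simps power2_eq_square)
  then show ?thesis
    by (simp add: DGform_def energy2_eq cell_energy_def sum.distrib power2_eq_square mult.assoc)
qed

lemma Gnum_le_Gamma_Gden:
  assumes "j \<in> {1..N-1}" "0 < Gden f xn u q j"
  shows "Gnum f xn \<beta>1 u q j \<le> Gamma f xn N \<beta>1 u q * Gden f xn u q j"
proof -
  have "Gnum f xn \<beta>1 u q j / Gden f xn u q j \<le> Gamma f xn N \<beta>1 u q"
    unfolding Gamma_def using assms(1) by (intro Max_ge) auto
  then show ?thesis using assms(2) by (simp add: pos_divide_le_eq)
qed

lemma avgf_nonneg:
  assumes mesh: "\<forall>j<N. xn j < xn (Suc j)"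
    and fnn: "\<forall>j\<in>{1..N}. \<forall>x\<in>{xn (j - 1)..xn j}. 0 \<le> f (poly (u j) x)"
    and j: "j \<in> {1..N-1}"
  shows "0 \<le> avgf f xn u j"
proof -
  have "xn (j - 1) \<le> xn j" "xn j \<le> xn (Suc j)"
    using mesh j by (auto dest: spec[of _ "j - 1"] spec[of _ j])
  moreover have "j \<le> N" "Suc j \<le> N"
    using j by auto
  ultimately show ?thesis
    using fnn[rule_format, of j "xn j"] fnn[rule_format, of "Suc j" "xn j"] j by (simp add: avgf_def)
qed

lemma cell_energy_nonneg:
  assumes f: "continuous_on {0<..} f"
    and pos: "\<forall>x\<in>{xn (j - 1)..xn j}. 0 < poly (u j) x"
    and fnn: "\<forall>x\<in>{xn (j - 1)..xn j}. 0 \<le> f (poly (u j) x)"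
  shows "0 \<le> cell_energy f xn u q j"
  unfolding cell_energy_def cellint_def
proof (rule integral_nonneg)
  have "continuous_on {xn (j - 1)..xn j} (\<lambda>x. f (poly (u j) x))"
    using f by (rule continuous_on_compose2) (use pos in \<open>auto intro: continuous_intros\<close>)
  then show "(\<lambda>x. f (poly (u j) x) * (poly (dx q j) x)\<^sup>2) integrable_on {xn (j - 1)..xn j}"
    by (intro integrable_continuous_interval continuous_intros)
qed (use fnn in auto)

lemma Gamma_nonneg:
  assumes "2 \<le> N" "0 < Gden f xn u q 1" "0 \<le> avgf f xn u 1"
  shows "0 \<le> Gamma f xn N \<beta>1 u q"
proof -
  have "0 \<le> Gnum f xn \<beta>1 u q 1"
    using assms(3) by (simp add: Gnum_def)
  also have "\<dots> \<le> Gamma f xn N \<beta>1 u q * Gden f xn u q 1"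
    using assms by (intro Gnum_le_Gamma_Gden) auto
  finally show ?thesis
    using assms(2) by (simp add: zero_le_mult_iff)
qed

lemma DGform_energy_dissipation:
  assumes N: "2 \<le> N" and mesh: "\<forall>j<N. xn j < xn (Suc j)" and f: "continuous_on {0<..} f"
    and pos: "\<forall>j\<in>{1..N}. \<forall>x\<in>{xn (j - 1)..xn j}. 0 < poly (u j) x"
    and fnn: "\<forall>j\<in>{1..N}. \<forall>x\<in>{xn (j - 1)..xn j}. 0 \<le> f (poly (u j) x)"
    and den: "\<forall>j\<in>{1..N-1}. 0 < Gden f xn u q j" and \<beta>0: "0 < \<beta>0"
  shows "DGform f xn N \<beta>0 \<beta>1 u q q
    \<le> - (1 - sqrt (Gamma f xn N \<beta>1 u q / \<beta>0)) * energy2 f xn N \<beta>0 u q"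
proof -
  have c: "0 \<le> avgf f xn u j" if "j \<in> {1..N-1}" for j
    using mesh fnn that by (rule avgf_nonneg)
  have bound: "avgf f xn u j * (mean_flux xn \<beta>1 q j)\<^sup>2 \<le> Gamma f xn N \<beta>1 u q *
      ((cell_energy f xn u q j + cell_energy f xn u q (Suc j)) / (2 * hI xn j))"
    if "j \<in> {1..N-1}" for j
    using Gnum_le_Gamma_Gden[OF that] den that
    by (simp add: Gnum_def Gden_def mean_flux_def cell_energy_def)
  have "0 \<le> Gamma f xn N \<beta>1 u q"
    using N den c by (intro Gamma_nonneg) auto
  then show ?thesis
    unfolding DGform_diagonal energy2_eq
    using f pos fnn c hI_pos[OF mesh] \<beta>0 bound
    by (intro discrete_energy_dissipation cell_energy_nonneg) auto
qed

theorem theorem3p1: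
  fixes xn :: "nat \<Rightarrow> real" and N k :: nat
    and f \<Phi> H Hd :: "real \<Rightarrow> real" and \<beta>0 \<beta>1 t :: real and T :: "real set"
    and U Ut Q :: "real \<Rightarrow> nat \<Rightarrow> real poly"
  assumes N: "2 \<le> N" and k: "1 \<le> k"
    and mesh: "\<forall>j<N. xn j < xn (Suc j)"
    and H: "\<forall>y>0. (H has_real_derivative Hd y) (at y)" and Hd: "continuous_on {0<..} Hd"
    and Phi: "continuous_on {xn 0..xn N} \<Phi>"
    and f: "continuous_on {0<..} f"
    and T: "open T" "t \<in> T"
    and Vh: "\<forall>s\<in>T. in_Vh k N (U s) \<and> in_Vh k N (Ut s) \<and> in_Vh k N (Q s)"
    and pos: "\<forall>s\<in>T. \<forall>j\<in>{1..N}. \<forall>x\<in>{xn (j - 1)..xn j}. 0 < poly (U s j) x"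
    and fnn: "\<forall>s\<in>T. \<forall>j\<in>{1..N}. \<forall>x\<in>{xn (j - 1)..xn j}. 0 \<le> f (poly (U s j) x)"
    and diff: "\<forall>s\<in>T. \<forall>j\<in>{1..N}. \<forall>i.
                 ((\<lambda>\<sigma>. coeff (U \<sigma> j) i) has_real_derivative coeff (Ut s j) i) (at s)"
    and eq1: "\<forall>s\<in>T. \<forall>v. in_Vh k N v \<longrightarrow>
                 (\<Sum>j=1..N. cellint xn j (\<lambda>x. poly (Ut s j) x * poly (v j) x))
                 = DGform f xn N \<beta>0 \<beta>1 (U s) (Q s) v"
    and eq2: "\<forall>s\<in>T. \<forall>r. in_Vh k N r \<longrightarrow>
                 (\<Sum>j=1..N. cellint xn j (\<lambda>x. poly (Q s j) x * poly (r j) x))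
                 = (\<Sum>j=1..N. cellint xn j (\<lambda>x. (\<Phi> x + Hd (poly (U s j) x)) * poly (r j) x))"
    and den: "\<forall>j\<in>{1..N-1}. 0 < Gden f xn (U t) (Q t) j"
    and beta: "Gamma f xn N \<beta>1 (U t) (Q t) < \<beta>0"
  shows "let \<gamma> = 1 - sqrt (Gamma f xn N \<beta>1 (U t) (Q t) / \<beta>0) in
           0 < \<gamma> \<and> \<gamma> \<le> 1 \<and>
           (\<exists>D. ((\<lambda>s. entropy \<Phi> H xn N (U s)) has_real_derivative D) (at t) \<and>
                D \<le> - \<gamma> * energy2 f xn N \<beta>0 (U t) (Q t))"
proof -
  define D where "D = (\<Sum>j=1..N. cellint xn j (\<lambda>x. (\<Phi> x + Hd (poly (U t j) x)) * poly (Ut t j) x))"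
  define \<Gamma> where "\<Gamma> = Gamma f xn N \<beta>1 (U t) (Q t)"
  have Vt: "in_Vh k N (Ut t)" "in_Vh k N (Q t)"
    using Vh T by auto
  have deriv: "((\<lambda>s. entropy \<Phi> H xn N (U s)) has_real_derivative D) (at t)"
    unfolding D_def using mesh H Hd Phi T Vh Vt pos diff
    by (intro entropy_has_real_derivative[where k=k and T=T]) auto
  have "D = (\<Sum>j=1..N. cellint xn j (\<lambda>x. poly (Q t j) x * poly (Ut t j) x))"
    using eq2 T Vt by (simp add: D_def)
  also have "\<dots> = DGform f xn N \<beta>0 \<beta>1 (U t) (Q t) (Q t)"
    using eq1 T Vt by (simp add: mult.commute)
  finally have D_eq: "D = DGform f xn N \<beta>0 \<beta>1 (U t) (Q t) (Q t)" .
  have "0 \<le> \<Gamma>"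
    unfolding \<Gamma>_def using N den fnn T mesh by (intro Gamma_nonneg avgf_nonneg) auto
  with beta have \<beta>0: "0 < \<beta>0" and "sqrt (\<Gamma> / \<beta>0) < 1"
    by (auto simp: \<Gamma>_def)
  moreover have "D \<le> - (1 - sqrt (\<Gamma> / \<beta>0)) * energy2 f xn N \<beta>0 (U t) (Q t)"
    unfolding D_eq \<Gamma>_def using pos fnn T by (intro DGform_energy_dissipation[OF N mesh f _ _ den \<beta>0]) auto
  ultimately show ?thesis
    using deriv \<open>0 \<le> \<Gamma>\<close> unfolding Let_def \<Gamma>_def by auto
qed

end
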